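(* Let $P$ be a Poisson tensor on $\mathbb{R}^3$, let $H\in C^\infty(\mathbb{R}^3)$, let $S\in C^\infty(\mathbb{R}^3)$ satisfy $PdS=0$, and let $g$ be the symmetric tensor with components $g^{ij}=H^iH^j-\delta^{ij}\sum_k H^kH^k$. Let $x(t)$ be a solution of $\dot{x}=PdH+gdS$ with $x(0)=x_0$. If $d_{x_0}S=0$, then $d_{x(t)}S=0$ for all times $t$.
   Context: $\mathbb{R}^3$ carries the standard Euclidean metric, used to identify tangent and cotangent spaces with $\mathbb{R}^3$; $H^i=H_i=\partial H/\partial x^i$. A Poisson tensor is a skew-symmetric bivector field satisfying the Jacobi identity. *)

theory Defs
  imports "HOL-Analysis.Analysis"
begin

definition pd :: "3 \<Rightarrow> (real^3 \<Rightarrow> real) \<Rightarrow> real^3 \<Rightarrow> real" where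
  "pd i f x = frechet_derivative f (at x) (axis i 1)"

text \<open>Gradient (= dH under the Euclidean identification), components H^i = dH/dx^i.\<close>
definition grad :: "(real^3 \<Rightarrow> real) \<Rightarrow> real^3 \<Rightarrow> real^3" where
  "grad f x = (\<chi> i. pd i f x)"

fun Ck :: "nat \<Rightarrow> (real^3 \<Rightarrow> real) \<Rightarrow> bool" where
  "Ck 0 f = continuous_on UNIV f"
| "Ck (Suc k) f = (f differentiable_on UNIV \<and> (\<forall>i. Ck k (pd i f)))"

definition smooth :: "(real^3 \<Rightarrow> real) \<Rightarrow> bool" where
  "smooth f = (\<forall>k. Ck k f)"

definition poisson_tensor :: "(real^3 \<Rightarrow> real^3^3) \<Rightarrow> bool" where
  "poisson_tensor P =
     ((\<forall>i j. smooth (\<lambda>x. P x $ i $ j)) \<and>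
      (\<forall>x i j. P x $ i $ j = - (P x $ j $ i)) \<and>
      (\<forall>x i j k. (\<Sum>l\<in>UNIV.
          P x $ i $ l * pd l (\<lambda>y. P y $ j $ k) x
        + P x $ j $ l * pd l (\<lambda>y. P y $ k $ i) x
        + P x $ k $ l * pd l (\<lambda>y. P y $ i $ j) x) = 0))"

definition gten :: "(real^3 \<Rightarrow> real) \<Rightarrow> real^3 \<Rightarrow> real^3^3" where
  "gten H x = (\<chi> i j. grad H x $ i * grad H x $ j
                 - (if i = j then 1 else 0) * (\<Sum>k\<in>UNIV. grad H x $ k * grad H x $ k))"

end

theory Submission
  imports Defs
begin

(* Along a trajectory the covector v(t) = d_{x(t)} S solves a linear equation v' = A(t) v with
   continuous A.  Indeed v' = Hess S (P dH + g dS) by the chain rule, and differentiating P dS = 0,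
   together with the symmetry of Hess S and the skew-symmetry of P, rewrites Hess S P dH as a term
   linear in dS.  Hence |v|^2 satisfies |(|v|^2)'| <= M |v|^2 on every compact time interval, and
   Gronwall's argument propagates v(0) = 0 to all times. *)

lemma pd_eq_if_has_derivative:
  assumes "(f has_derivative f') (at y)"
  shows "pd i f y = f' (axis i 1)"
  using assms by (metis frechet_derivative_at pd_def)

lemma has_derivative_inner_grad:
  assumes "f differentiable (at y)"
  shows "(f has_derivative (\<lambda>w. w \<bullet> grad f y)) (at y)"
proof -
  let ?f' = "frechet_derivative f (at y)"
  have D: "(f has_derivative ?f') (at y)"
    using assms frechet_derivative_works by blast
  interpret f': linear ?f'
    using has_derivative_linear[OF D] .
  have "?f' w = w \<bullet> grad f y" for w
  proof -
    have "?f' w = ?f' (\<Sum>k\<in>UNIV. w $ k *\<^sub>R axis k 1)"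
      by (simp add: basis_expansion[of w, unfolded scalar_mult_eq_scaleR])
    also have "\<dots> = (\<Sum>k\<in>UNIV. w $ k * pd k f y)"
      by (simp add: f'.sum f'.scale pd_def)
    finally show ?thesis
      by (simp add: inner_vec_def grad_def)
  qed
  then have "?f' = (\<lambda>w. w \<bullet> grad f y)"
    by (simp add: fun_eq_iff)
  with D show ?thesis
    by simp
qed

lemma pd_sum_mult:
  assumes "finite K"
    and "\<And>k. k \<in> K \<Longrightarrow> f k differentiable (at y)"
    and "\<And>k. k \<in> K \<Longrightarrow> g k differentiable (at y)"
  shows "pd i (\<lambda>z. \<Sum>k\<in>K. f k z * g k z) y
       = (\<Sum>k\<in>K. pd i (f k) y * g k y + f k y * pd i (g k) y)"
proof -
  have "((\<lambda>z. \<Sum>k\<in>K. f k z * g k z) has_derivative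
         (\<lambda>w. \<Sum>k\<in>K. f k y * (w \<bullet> grad (g k) y) + (w \<bullet> grad (f k) y) * g k y)) (at y)"
    using assms by (intro has_derivative_sum has_derivative_mult has_derivative_inner_grad) auto
  then show ?thesis
    by (simp add: pd_eq_if_has_derivative grad_def inner_axis' add.commute)
qed

lemma has_real_derivative_along_axis:
  assumes "f differentiable (at (p + s *\<^sub>R axis i 1))"
  shows "((\<lambda>s. f (p + s *\<^sub>R axis i 1)) has_real_derivative pd i f (p + s *\<^sub>R axis i 1)) (at s)"
proof -
  have "((\<lambda>s. p + s *\<^sub>R axis i 1) has_vector_derivative axis i 1) (at s)"
    by (auto intro!: derivative_eq_intros)
  from vector_derivative_diff_chain_within[OF this
      has_derivative_at_withinI[OF has_derivative_inner_grad[OF assms]]]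
  show ?thesis
    by (simp add: has_real_derivative_iff_has_vector_derivative o_def grad_def inner_axis')
qed

lemma second_difference_mvt:
  assumes f_diff: "\<And>z. f differentiable (at z)"
    and pd_diff: "\<And>z. pd k f differentiable (at z)"
    and "0 < h"
  obtains \<xi> where "norm (\<xi> - y) \<le> 2 * h"
    and "f (y + h *\<^sub>R axis i 1 + h *\<^sub>R axis k 1) - f (y + h *\<^sub>R axis k 1)
           - f (y + h *\<^sub>R axis i 1) + f y = h\<^sup>2 * pd i (pd k f) \<xi>"
proof -
  define a b :: "real^3" where "a = axis i 1" and "b = axis k 1"
  define \<phi> where "\<phi> s = f (y + h *\<^sub>R a + s *\<^sub>R b) - f (y + s *\<^sub>R b)" for s
  have "(\<phi> has_real_derivative pd k f (y + h *\<^sub>R a + s *\<^sub>R b) - pd k f (y + s *\<^sub>R b)) (at s)" for s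
    unfolding \<phi>_def b_def
    by (intro DERIV_diff has_real_derivative_along_axis f_diff)
  then obtain s where s: "0 < s" "s < h"
    and \<phi>_mvt: "\<phi> h - \<phi> 0 = (h - 0) * (pd k f (y + h *\<^sub>R a + s *\<^sub>R b) - pd k f (y + s *\<^sub>R b))"
    using MVT2[OF \<open>0 < h\<close>, of \<phi> "\<lambda>s. pd k f (y + h *\<^sub>R a + s *\<^sub>R b) - pd k f (y + s *\<^sub>R b)"]
    by blast
  define \<psi> where "\<psi> r = pd k f (y + s *\<^sub>R b + r *\<^sub>R a)" for r
  have "(\<psi> has_real_derivative pd i (pd k f) (y + s *\<^sub>R b + r *\<^sub>R a)) (at r)" for r
    unfolding \<psi>_def a_def by (intro has_real_derivative_along_axis pd_diff)
  then obtain r where r: "0 < r" "r < h"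
    and \<psi>_mvt: "\<psi> h - \<psi> 0 = (h - 0) * pd i (pd k f) (y + s *\<^sub>R b + r *\<^sub>R a)"
    using MVT2[OF \<open>0 < h\<close>, of \<psi> "\<lambda>r. pd i (pd k f) (y + s *\<^sub>R b + r *\<^sub>R a)"]
    by blast
  show thesis
  proof
    have "norm (s *\<^sub>R b + r *\<^sub>R a) \<le> s + r"
      using norm_triangle_ineq[of "s *\<^sub>R b" "r *\<^sub>R a"] s r by (simp add: a_def b_def)
    then show "norm ((y + s *\<^sub>R b + r *\<^sub>R a) - y) \<le> 2 * h"
      using s r by (simp add: add.assoc)
    have "\<psi> h - \<psi> 0 = pd k f (y + h *\<^sub>R a + s *\<^sub>R b) - pd k f (y + s *\<^sub>R b)"
      by (simp add: \<psi>_def add_ac)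
    with \<phi>_mvt \<psi>_mvt show "f (y + h *\<^sub>R axis i 1 + h *\<^sub>R axis k 1) - f (y + h *\<^sub>R axis k 1)
        - f (y + h *\<^sub>R axis i 1) + f y = h\<^sup>2 * pd i (pd k f) (y + s *\<^sub>R b + r *\<^sub>R a)"
      by (simp add: \<phi>_def a_def b_def power2_eq_square)
  qed
qed

lemma pd_pd_eq_nearby:
  assumes "Ck 2 f" and "0 < h"
  obtains \<xi> \<eta> where "norm (\<xi> - y) \<le> 2 * h" and "norm (\<eta> - y) \<le> 2 * h"
    and "pd k (pd i f) \<eta> = pd i (pd k f) \<xi>"
proof -
  have f_diff: "\<And>z. f differentiable (at z)" and pd_diff: "\<And>j z. pd j f differentiable (at z)"
    using assms by (simp_all add: numeral_2_eq_2 differentiable_on_def)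
  obtain \<xi> where \<xi>: "norm (\<xi> - y) \<le> 2 * h"
    and \<xi>_diff: "f (y + h *\<^sub>R axis i 1 + h *\<^sub>R axis k 1) - f (y + h *\<^sub>R axis k 1)
                 - f (y + h *\<^sub>R axis i 1) + f y = h\<^sup>2 * pd i (pd k f) \<xi>"
    using second_difference_mvt[OF f_diff pd_diff \<open>0 < h\<close>] .
  obtain \<eta> where \<eta>: "norm (\<eta> - y) \<le> 2 * h"
    and \<eta>_diff: "f (y + h *\<^sub>R axis k 1 + h *\<^sub>R axis i 1) - f (y + h *\<^sub>R axis i 1)
                 - f (y + h *\<^sub>R axis k 1) + f y = h\<^sup>2 * pd k (pd i f) \<eta>"
    using second_difference_mvt[OF f_diff pd_diff \<open>0 < h\<close>] .
  have "y + h *\<^sub>R axis k 1 + h *\<^sub>R axis i 1 = y + h *\<^sub>R axis i 1 + h *\<^sub>R axis k (1::real)"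
    by (simp add: add_ac)
  then have "h\<^sup>2 * pd k (pd i f) \<eta> = h\<^sup>2 * pd i (pd k f) \<xi>"
    using \<xi>_diff \<eta>_diff by (simp only:)
  with \<xi> \<eta> \<open>0 < h\<close> show thesis
    by (intro that) auto
qed

lemma pd_pd_commute:
  assumes "Ck 2 f"
  shows "pd k (pd i f) y = pd i (pd k f) y"
proof -
  have "\<bar>pd k (pd i f) y - pd i (pd k f) y\<bar> \<le> 0 + e" if "0 < e" for e
  proof -
    have "\<exists>d>0. \<forall>z. dist z y < d \<longrightarrow> dist (pd l (pd j f) z) (pd l (pd j f) y) < e / 2" for j l
    proof -
      have "isCont (pd l (pd j f)) y"
        using assms by (simp add: numeral_2_eq_2 continuous_on_eq_continuous_at)
      then show ?thesis
        using half_gt_zero[OF \<open>0 < e\<close>] unfolding continuous_at_eps_delta by blast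
    qed
    then obtain d1 d2 where "0 < d1" "0 < d2"
      and d1: "\<And>z. dist z y < d1 \<Longrightarrow> dist (pd k (pd i f) z) (pd k (pd i f) y) < e / 2"
      and d2: "\<And>z. dist z y < d2 \<Longrightarrow> dist (pd i (pd k f) z) (pd i (pd k f) y) < e / 2"
      by meson
    define h where "h = min d1 d2 / 4"
    have "0 < h"
      using \<open>0 < d1\<close> \<open>0 < d2\<close> by (simp add: h_def)
    then obtain \<xi> \<eta> where "norm (\<xi> - y) \<le> 2 * h" "norm (\<eta> - y) \<le> 2 * h"
      and "pd k (pd i f) \<eta> = pd i (pd k f) \<xi>"
      using pd_pd_eq_nearby[OF assms] by blast
    moreover from this have "dist \<eta> y < d1" "dist \<xi> y < d2"
      using \<open>0 < h\<close> by (auto simp: dist_norm h_def)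
    ultimately show ?thesis
      using d1[of \<eta>] d2[of \<xi>] unfolding dist_real_def by linarith
  qed
  then have "\<bar>pd k (pd i f) y - pd i (pd k f) y\<bar> \<le> 0"
    by (rule field_le_epsilon)
  then show ?thesis
    by simp
qed

lemma sum_axis_nth_mult: "(\<Sum>k\<in>UNIV. axis k (1::real) $ i * g k) = g i"
proof -
  have "axis k (1::real) $ i * g k = (if k = i then g i else 0)" for k
    by (simp add: axis_def)
  then show ?thesis
    by simp
qed

definition hessian :: "(real^3 \<Rightarrow> real) \<Rightarrow> real^3 \<Rightarrow> real^3^3" where
  "hessian f x = (\<chi> i k. pd k (pd i f) x)"

lemma has_derivative_grad:
  assumes "\<And>i. pd i f differentiable (at y)"
  shows "(grad f has_derivative (\<lambda>w. hessian f y *v w)) (at y)"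
proof -
  have "grad f z = (\<Sum>i\<in>UNIV. pd i f z *\<^sub>R axis i 1)" for z
    using basis_expansion[of "grad f z"] by (simp add: grad_def scalar_mult_eq_scaleR)
  then have grad_expansion: "grad f = (\<lambda>z. \<Sum>i\<in>UNIV. pd i f z *\<^sub>R axis i 1)"
    by blast
  have "(grad f has_derivative (\<lambda>w. \<Sum>i\<in>UNIV. (w \<bullet> grad (pd i f) y) *\<^sub>R axis i 1)) (at y)"
    unfolding grad_expansion
    by (intro has_derivative_sum has_derivative_scaleR_left has_derivative_inner_grad assms)
  moreover have "(\<Sum>i\<in>UNIV. (w \<bullet> grad (pd i f) y) *\<^sub>R axis i 1) = hessian f y *v w" for w
    by (simp add: vec_eq_iff hessian_def grad_def matrix_vector_mult_def inner_vec_def sum_axis_nth_mult mult.commute)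
  ultimately show ?thesis
    by simp
qed

definition matrix_pd :: "3 \<Rightarrow> (real^3 \<Rightarrow> real^'n^'m) \<Rightarrow> real^3 \<Rightarrow> real^'n^'m" where
  "matrix_pd i P y = (\<chi> l j. pd i (\<lambda>z. P z $ l $ j) y)"

lemma continuous_on_grad: "Ck 1 f \<Longrightarrow> continuous_on UNIV (grad f)"
  unfolding grad_def by (intro continuous_on_vec_lambda) simp

lemma continuous_on_hessian: "Ck 2 f \<Longrightarrow> continuous_on UNIV (hessian f)"
  unfolding hessian_def by (intro continuous_on_vec_lambda) (simp add: numeral_2_eq_2)

lemma continuous_on_matrix_pd:
  "(\<And>l j. Ck 1 (\<lambda>y. P y $ l $ j)) \<Longrightarrow> continuous_on UNIV (matrix_pd i P)"
  unfolding matrix_pd_def by (intro continuous_on_vec_lambda) simp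

lemma continuous_on_gten: "Ck 1 H \<Longrightarrow> continuous_on UNIV (gten H)"
  unfolding gten_def by (intro continuous_intros continuous_on_grad)

lemma gronwall_vanishing:
  fixes f f' :: "real \<Rightarrow> real"
  assumes "a \<le> b"
    and deriv: "\<And>t. t \<in> {a..b} \<Longrightarrow> (f has_real_derivative f' t) (at t)"
    and bound: "\<And>t. t \<in> {a..b} \<Longrightarrow> \<bar>f' t\<bar> \<le> M * f t"
    and nonneg: "\<And>t. t \<in> {a..b} \<Longrightarrow> 0 \<le> f t"
  shows "f a = 0 \<longleftrightarrow> f b = 0"
proof
  assume "f a = 0"
  have "f b * exp (- M * b) \<le> f a * exp (- M * a)"
  proof (rule DERIV_nonpos_imp_nonincreasing[OF \<open>a \<le> b\<close>, of "\<lambda>t. f t * exp (- M * t)"])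
    fix t assume "a \<le> t" "t \<le> b"
    then have "((\<lambda>t. f t * exp (- M * t)) has_real_derivative (f' t - M * f t) * exp (- M * t)) (at t)"
      by (auto intro!: derivative_eq_intros deriv simp: algebra_simps)
    moreover have "(f' t - M * f t) * exp (- M * t) \<le> 0"
      using bound[of t] \<open>a \<le> t\<close> \<open>t \<le> b\<close> by (simp add: mult_nonpos_nonneg)
    ultimately show "\<exists>y. ((\<lambda>t. f t * exp (- M * t)) has_real_derivative y) (at t) \<and> y \<le> 0"
      by blast
  qed
  with \<open>f a = 0\<close> nonneg[of b] \<open>a \<le> b\<close> show "f b = 0"
    by (simp add: mult_le_0_iff)
next
  assume "f b = 0"
  have "f a * exp (M * a) \<le> f b * exp (M * b)"
  proof (rule DERIV_nonneg_imp_nondecreasing[OF \<open>a \<le> b\<close>, of "\<lambda>t. f t * exp (M * t)"])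
    fix t assume "a \<le> t" "t \<le> b"
    then have "((\<lambda>t. f t * exp (M * t)) has_real_derivative (f' t + M * f t) * exp (M * t)) (at t)"
      by (auto intro!: derivative_eq_intros deriv simp: algebra_simps)
    moreover have "0 \<le> (f' t + M * f t) * exp (M * t)"
      using bound[of t] \<open>a \<le> t\<close> \<open>t \<le> b\<close> by simp
    ultimately show "\<exists>y. ((\<lambda>t. f t * exp (M * t)) has_real_derivative y) (at t) \<and> 0 \<le> y"
      by blast
  qed
  with \<open>f b = 0\<close> nonneg[of a] \<open>a \<le> b\<close> show "f a = 0"
    by (simp add: mult_le_0_iff)
qed

lemma linear_ode_vanishing:
  fixes v :: "real \<Rightarrow> real^'n" and A :: "real \<Rightarrow> real^'n^'n"
  assumes "is_interval I" and "t0 \<in> I" and "t \<in> I"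
    and deriv: "\<And>s. s \<in> I \<Longrightarrow> (v has_vector_derivative A s *v v s) (at s)"
    and cont: "continuous_on I A"
    and "v t0 = 0"
  shows "v t = 0"
proof -
  define a b where "a = min t0 t" and "b = max t0 t"
  have "a \<le> b"
    by (simp add: a_def b_def)
  have ab: "{a..b} \<subseteq> I"
    using \<open>is_interval I\<close> \<open>t0 \<in> I\<close> \<open>t \<in> I\<close> unfolding is_interval_1 a_def b_def
    by (metis atLeastAtMost_iff max_def min_def subsetI)
  define K where "K s = (\<Sum>i\<in>UNIV. \<Sum>j\<in>UNIV. \<bar>A s $ i $ j\<bar>)" for s
  have "continuous_on {a..b} K"
    unfolding K_def using continuous_on_subset[OF cont ab] by (intro continuous_intros)
  then obtain M where M: "\<forall>s\<in>{a..b}. K s \<le> M"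
    using continuous_attains_sup[of "{a..b}" K] \<open>a \<le> b\<close> by auto
  have norm_A: "norm (A s *v w) \<le> K s * norm w" for s w
    using onorm[OF matrix_vector_mul_bounded_linear, of "A s" w]
      onorm_le_matrix_component_sum[of "A s"]
    by (simp add: K_def) (meson mult_right_mono norm_ge_zero order_trans)
  have energy_deriv: "((\<lambda>s. v s \<bullet> v s) has_real_derivative 2 * (v s \<bullet> (A s *v v s))) (at s)"
    if "s \<in> I" for s
  proof -
    have "((\<lambda>s. v s \<bullet> v s) has_derivative
           (\<lambda>h. v s \<bullet> (h *\<^sub>R (A s *v v s)) + (h *\<^sub>R (A s *v v s)) \<bullet> v s)) (at s)"
      using deriv[OF that] unfolding has_vector_derivative_def by (intro has_derivative_inner)
    then show ?thesis
      unfolding has_field_derivative_def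
      by (rule has_derivative_eq_rhs) (simp add: fun_eq_iff inner_commute algebra_simps)
  qed
  have energy_bound: "\<bar>2 * (v s \<bullet> (A s *v v s))\<bar> \<le> (2 * M) * (v s \<bullet> v s)"
    if "s \<in> {a..b}" for s
  proof -
    have "\<bar>v s \<bullet> (A s *v v s)\<bar> \<le> norm (v s) * norm (A s *v v s)"
      by (rule Cauchy_Schwarz_ineq2)
    also have "\<dots> \<le> norm (v s) * (M * norm (v s))"
      using norm_A[of s "v s"] M that
      by (meson mult_left_mono mult_right_mono norm_ge_zero order_trans)
    finally show ?thesis
      by (simp add: power2_norm_eq_inner[symmetric] power2_eq_square mult_ac)
  qed
  have "v a \<bullet> v a = 0 \<longleftrightarrow> v b \<bullet> v b = 0"
    using ab by (intro gronwall_vanishing[OF \<open>a \<le> b\<close> energy_deriv energy_bound]) auto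
  moreover have "t0 = a \<or> t0 = b" "t = a \<or> t = b"
    by (auto simp: a_def b_def)
  ultimately show ?thesis
    using \<open>v t0 = 0\<close> by auto
qed

lemma hessian_mult_skew_casimir:
  assumes skew: "\<And>l k. P y $ l $ k = - P y $ k $ l"
    and P_diff: "\<And>l k. (\<lambda>z. P z $ l $ k) differentiable (at y)"
    and S: "Ck 2 S"
    and casimir: "\<And>z. P z *v grad S z = 0"
  shows "hessian S y *v (P y *v w) = (\<chi> i. w v* matrix_pd i P y) *v grad S y"
proof -
  have S_diff: "pd k S differentiable (at y)" for k
    using S by (simp add: numeral_2_eq_2 differentiable_on_def)
  have casimir_pd: "(\<Sum>k\<in>UNIV. pd i (\<lambda>z. P z $ l $ k) y * pd k S y)
      = - (\<Sum>k\<in>UNIV. P y $ l $ k * pd i (pd k S) y)" for i l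
  proof -
    have "(\<lambda>z. \<Sum>k\<in>UNIV. P z $ l $ k * pd k S z) = (\<lambda>z. 0)"
      using casimir by (simp add: fun_eq_iff vec_eq_iff matrix_vector_mult_def grad_def)
    then have "pd i (\<lambda>z. \<Sum>k\<in>UNIV. P z $ l $ k * pd k S z) y = 0"
      by (simp add: pd_eq_if_has_derivative[OF has_derivative_const])
    then show ?thesis
      by (simp add: pd_sum_mult P_diff S_diff sum.distrib eq_neg_iff_add_eq_0)
  qed
  have skew_sum: "(\<Sum>k\<in>UNIV. P y $ k $ l * c k) = - (\<Sum>k\<in>UNIV. P y $ l $ k * c k)" for l c
    by (subst sum_negf[symmetric]) (rule sum.cong[OF refl], subst skew, simp)
  have "(hessian S y *v (P y *v w)) $ i = ((\<chi> i. w v* matrix_pd i P y) *v grad S y) $ i" for i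
  proof -
    have "(hessian S y *v (P y *v w)) $ i = (\<Sum>k\<in>UNIV. pd k (pd i S) y * (\<Sum>l\<in>UNIV. P y $ k $ l * w $ l))"
      by (simp add: hessian_def matrix_vector_mult_def)
    also have "\<dots> = (\<Sum>l\<in>UNIV. w $ l * (\<Sum>k\<in>UNIV. P y $ k $ l * pd i (pd k S) y))"
      unfolding sum_distrib_left by (subst sum.swap) (simp add: pd_pd_commute[OF S, where i=i] mult_ac)
    also have "\<dots> = (\<Sum>l\<in>UNIV. w $ l * (\<Sum>k\<in>UNIV. pd i (\<lambda>z. P z $ l $ k) y * pd k S y))"
      by (simp add: skew_sum casimir_pd)
    also have "\<dots> = (\<Sum>k\<in>UNIV. (\<Sum>l\<in>UNIV. w $ l * pd i (\<lambda>z. P z $ l $ k) y) * pd k S y)"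
      unfolding sum_distrib_left sum_distrib_right by (subst sum.swap) (simp add: mult_ac)
    also have "\<dots> = ((\<chi> i. w v* matrix_pd i P y) *v grad S y) $ i"
      by (simp add: matrix_vector_mult_def vector_matrix_mult_def matrix_pd_def grad_def mult_ac)
    finally show ?thesis .
  qed
  then show ?thesis
    by (simp add: vec_eq_iff)
qed

lemma has_vector_derivative_grad_casimir:
  assumes skew: "\<And>y l k. P y $ l $ k = - P y $ k $ l"
    and P_diff: "\<And>y l k. (\<lambda>z. P z $ l $ k) differentiable (at y)"
    and S: "Ck 2 S"
    and casimir: "\<And>z. P z *v grad S z = 0"
    and x: "(x has_vector_derivative P (x t) *v w + G (x t) *v grad S (x t)) (at t)"
  shows "((\<lambda>t. grad S (x t)) has_vector_derivative
           ((\<chi> i. w v* matrix_pd i P (x t)) + hessian S (x t) ** G (x t)) *v grad S (x t)) (at t)"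
proof -
  have "pd i S differentiable (at y)" for i y
    using S by (simp add: numeral_2_eq_2 differentiable_on_def)
  then have "(grad S has_derivative (\<lambda>v. hessian S (x t) *v v)) (at (x t))"
    by (rule has_derivative_grad)
  from vector_derivative_diff_chain_within[OF x has_derivative_at_withinI[OF this]]
  have "((\<lambda>t. grad S (x t)) has_vector_derivative
          hessian S (x t) *v (P (x t) *v w + G (x t) *v grad S (x t))) (at t)"
    by (simp add: o_def)
  also have "hessian S (x t) *v (P (x t) *v w + G (x t) *v grad S (x t))
      = hessian S (x t) *v (P (x t) *v w) + (hessian S (x t) ** G (x t)) *v grad S (x t)"
    by (simp add: matrix_vector_right_distrib matrix_vector_mul_assoc)
  also have "\<dots> = ((\<chi> i. w v* matrix_pd i P (x t)) + hessian S (x t) ** G (x t)) *v grad S (x t)"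
    by (simp add: hessian_mult_skew_casimir[OF skew P_diff S casimir] matrix_vector_mult_add_rdistrib)
  finally show ?thesis .
qed

theorem mainTheorem10:
  fixes P :: "real^3 \<Rightarrow> real^3^3"
    and H S :: "real^3 \<Rightarrow> real"
    and x :: "real \<Rightarrow> real^3"
    and I :: "real set"
    and x0 :: "real^3"
  assumes "poisson_tensor P"
    and "smooth H" and "smooth S"
    and "\<forall>y. P y *v grad S y = 0"
    and "open I" and "is_interval I" and "0 \<in> I"
    and "\<forall>t\<in>I. (x has_vector_derivative
                 (P (x t) *v grad H (x t) + gten H (x t) *v grad S (x t))) (at t)"
    and "x 0 = x0"
    and "grad S x0 = 0"
  shows "\<forall>t\<in>I. grad S (x t) = 0"
proof
  fix t assume "t \<in> I"
  have skew: "\<And>y l k. P y $ l $ k = - P y $ k $ l"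
    and P_C1: "\<And>l k. Ck 1 (\<lambda>y. P y $ l $ k)"
    using \<open>poisson_tensor P\<close> unfolding poisson_tensor_def smooth_def by blast+
  have P_diff: "\<And>y l k. (\<lambda>z. P z $ l $ k) differentiable (at y)"
    using P_C1 by (simp add: differentiable_on_def)
  have H_C1: "Ck 1 H" and S_C2: "Ck 2 S"
    using \<open>smooth H\<close> \<open>smooth S\<close> unfolding smooth_def by blast+
  define A where "A y = (\<chi> i. grad H y v* matrix_pd i P y) + hessian S y ** gten H y" for y
  have "continuous_on UNIV A"
    unfolding A_def vector_matrix_mult_def matrix_matrix_mult_def
    by (intro continuous_intros continuous_on_grad continuous_on_matrix_pd continuous_on_hessian
        continuous_on_gten H_C1 P_C1 S_C2)
  moreover have "continuous_on I x"
    using assms(8) by (meson continuous_at_imp_continuous_on has_vector_derivative_continuous)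
  ultimately have A_cont: "continuous_on I (\<lambda>s. A (x s))"
    by (rule continuous_on_compose2) simp
  have dS_deriv: "((\<lambda>s. grad S (x s)) has_vector_derivative A (x s) *v grad S (x s)) (at s)"
    if "s \<in> I" for s
    unfolding A_def using assms(4,8) that
    by (intro has_vector_derivative_grad_casimir[OF skew P_diff S_C2]) auto
  show "grad S (x t) = 0"
    using linear_ode_vanishing[where v = "\<lambda>s. grad S (x s)", OF \<open>is_interval I\<close> \<open>0 \<in> I\<close>
        \<open>t \<in> I\<close> dS_deriv A_cont] assms(9,10) by simp
qed

end
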